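(* Setting: $n$ agents on a connected, undirected weighted graph $\mathcal G$ with symmetric adjacency weights $a_{i,j}\ge 0$ ($a_{i,j}>0$ iff $\{i,j\}$ is an edge) and Laplacian $L_n$; let $L=L_n\otimes I_m$. For $i\in\{1,\dots,n\}$, $\Omega_i\subset\mathbb R^{q_i}$ is closed and convex, $f^i$ is strictly convex on an open set containing $\Omega_i$, $W_i\in\mathbb R^{m\times q_i}$, and $d_i\in\mathbb R^m$ with $\sum_{i=1}^n d_i=d_0$. Let $\Omega=\prod_i\Omega_i$, $f(x)=\sum_i f^i(x_i)$, $W=[W_1,\dots,W_n]$, $\overline W=\mathrm{diag}\{W_1,\dots,W_n\}\in\mathbb R^{nm\times\sum_iq_i}$, $d=[d_1^{\rm T},\dots,d_n^{\rm T}]^{\rm T}$, and assume Slater's condition: some $x$ in the interior of $\Omega$ satisfies $Wx=d_0$. Consider the optimization problem $\min f(x)$ subject to $Wx=d_0$, $x\in\Omega$, and the differential inclusion (DPOFA) in $(y,\lambda,z)\in\mathbb R^{\sum_iq_i}\times\mathbb R^{nm}\times\mathbb R^{nm}$: $$\dot y\in\{-y+x-g+\overline W^{\rm T}\lambda:\ g\in\partial f(x)\},\quad \dot\lambda=d-\overline Wx-L\lambda-Lz,\quad \dot z=L\lambda,\quad x=P_\Omega(y).$$ Then: if $(y^*,\lambda^*,z^* )$ is an equilibrium of DPOFA, $x^*=P_\Omega(y^* )$ is a solution of the optimization problem; conversely, if $x^*\in\Omega$ is a solution of the optimization problem, there exists an equilibrium $(y^*,\lambda^*,z^* )$ of DPOFA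 with $x^*=P_\Omega(y^* )$.
   Context: $\partial f$ is the convex subdifferential; $P_\Omega$ is Euclidean projection onto $\Omega$. An equilibrium of the inclusion $\dot\xi\in\mathcal F(\xi)$ is a point $\xi_e$ with $0\in\mathcal F(\xi_e)$; here this means there is $g\in\partial f(x^* )$, $x^*=P_\Omega(y^* )$, with $0=-y^*+x^*-g+\overline W^{\rm T}\lambda^*$, $0=d-\overline Wx^*-Lz^*$, $0=L\lambda^*$. *)

theory Defs
  imports "HOL-Analysis.Analysis"
begin

definition strictly_convex_on :: "'a::real_vector set \<Rightarrow> ('a \<Rightarrow> real) \<Rightarrow> bool" where
  "strictly_convex_on S f \<longleftrightarrow> convex S \<and>
    (\<forall>x\<in>S. \<forall>y\<in>S. x \<noteq> y \<longrightarrow> (\<forall>u>0. \<forall>v>0. u + v = 1 \<longrightarrow>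
        f (u *\<^sub>R x + v *\<^sub>R y) < u * f x + v * f y))"

definition subdiff :: "'a::real_inner set \<Rightarrow> ('a \<Rightarrow> real) \<Rightarrow> 'a \<Rightarrow> 'a set" where
  "subdiff D f x = {g. \<forall>z\<in>D. f z \<ge> f x + inner g (z - x)}"

(* Global decision vector x in R^(q_1+...+q_n): coordinates of type 'q, the coordinate k
   belongs to agent blk k.  R^(q_i) is identified with the coordinate subspace of block i. *)
definition blocksub :: "('q \<Rightarrow> 'n) \<Rightarrow> 'n \<Rightarrow> (real^'q::finite) set" where
  "blocksub blk i = {x. \<forall>k. blk k \<noteq> i \<longrightarrow> x $ k = 0}"

definition blockproj :: "('q \<Rightarrow> 'n) \<Rightarrow> 'n \<Rightarrow> real^'q::finite \<Rightarrow> real^'q" where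
  "blockproj blk i x = (\<chi> k. if blk k = i then x $ k else 0)"

definition prodset :: "('q \<Rightarrow> 'n) \<Rightarrow> ('n \<Rightarrow> (real^'q::finite) set) \<Rightarrow> (real^'q) set" where
  "prodset blk Om = {x. \<forall>i. blockproj blk i x \<in> Om i}"

definition sumfun :: "('q \<Rightarrow> 'n::finite) \<Rightarrow> ('n \<Rightarrow> real^'q::finite \<Rightarrow> real) \<Rightarrow> real^'q \<Rightarrow> real" where
  "sumfun blk fl x = (\<Sum>i\<in>UNIV. fl i (blockproj blk i x))"

definition Wmul :: "('q \<Rightarrow> 'n::finite) \<Rightarrow> ('n \<Rightarrow> real^'q^'m) \<Rightarrow> real^'q::finite \<Rightarrow> real^'m::finite" where
  "Wmul blk Wl x = (\<Sum>i\<in>UNIV. Wl i *v blockproj blk i x)"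

(* Wbar = diag{W_1,...,W_n}, rows indexed by (agent, component) *)
definition Wbar :: "('q \<Rightarrow> 'n::finite) \<Rightarrow> ('n \<Rightarrow> real^'q^'m) \<Rightarrow> real^'q::finite^('n \<times> 'm::finite)" where
  "Wbar blk Wl = (\<chi> p k. if blk k = fst p then Wl (fst p) $ snd p $ k else 0)"

definition stack :: "('n::finite \<Rightarrow> real^'m::finite) \<Rightarrow> real^('n \<times> 'm)" where
  "stack dl = (\<chi> p. dl (fst p) $ snd p)"

definition laplacian :: "real^'n^'n \<Rightarrow> real^'n::finite^'n" where
  "laplacian a = (\<chi> i j. if i = j then (\<Sum>k\<in>UNIV - {i}. a $ i $ k) else - a $ i $ j)"

definition kron_id :: "real^'n^'n \<Rightarrow> real^('n::finite \<times> 'm::finite)^('n \<times> 'm)" where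
  "kron_id Lap = (\<chi> p p'. Lap $ fst p $ fst p' * (if snd p = snd p' then 1 else 0))"

definition connected_graph :: "real^'n^'n \<Rightarrow> bool" where
  "connected_graph a \<longleftrightarrow> (\<forall>i j. (i, j) \<in> {(u, v). u \<noteq> v \<and> a $ u $ v > 0}\<^sup>*)"

end

theory Submission
  imports Defs
begin

(* At an equilibrium, L lambda = 0 forces lambda to be a consensus vector 1 (x) mu because the
   graph is connected; summing the lambda-equation over the agents kills the Laplacian terms
   (its columns sum to zero) and yields feasibility W x = d0. The y-equation then says that
   y - x = -g + W^T mu, and the variational inequality of the projection shows that g is
   nonnegative on feasible directions, so x is optimal by the subgradient inequality.
   Conversely, at an optimum, separating the epigraph of f from the strict sublevel set over
   the feasible set gives a subgradient g in the normal cone of the feasible set; Slater's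
   condition turns the equality constraint into a multiplier mu (a second separation), and
   y = x - g + Wbar^T (1 (x) mu) projects onto x. Finally L z = d - Wbar x is solvable since the
   right-hand side sums to zero over the agents and range L = (ker L)^perp. Strict convexity
   of the f^i is only used as convexity. *)

lemma inner_max_on_open_imp_zero:
  fixes a :: "'a::real_inner"
  assumes "open S" "x \<in> S" "\<And>y. y \<in> S \<Longrightarrow> inner a y \<le> inner a x"
  shows "a = 0"
proof (rule ccontr)
  assume "a \<noteq> 0"
  obtain r where "r > 0" "ball x r \<subseteq> S" using assms(1,2) open_contains_ball by blast
  define y where "y = x + (r / 2 / norm a) *\<^sub>R a"
  have "y \<in> S" using \<open>r > 0\<close> \<open>a \<noteq> 0\<close> \<open>ball x r \<subseteq> S\<close> by (auto simp: y_def dist_norm)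
  moreover have "inner a y = inner a x + r / 2 * norm a"
    using \<open>a \<noteq> 0\<close>
    by (simp add: y_def inner_add_right power2_norm_eq_inner[symmetric] power2_eq_square)
  ultimately show False using assms(3)[of y] \<open>r > 0\<close> \<open>a \<noteq> 0\<close> by (simp add: mult_le_0_iff)
qed

lemma closest_point_unique_dot:
  fixes y :: "'a::euclidean_space"
  assumes "convex S" "closed S" "x \<in> S" "\<And>z. z \<in> S \<Longrightarrow> inner (y - x) (z - x) \<le> 0"
  shows "closest_point S y = x"
proof (rule closest_point_unique[OF assms(1-3), symmetric], intro ballI)
  fix z assume "z \<in> S"
  have "inner (y - z) (y - z) = inner (y - x) (y - x) - 2 * inner (y - x) (z - x) + inner (z - x) (z - x)"
    by (simp add: inner_diff_left inner_diff_right inner_commute)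
  then have "inner (y - x) (y - x) \<le> inner (y - z) (y - z)"
    using assms(4)[OF \<open>z \<in> S\<close>] inner_ge_zero[of "z - x"] by linarith
  then show "dist y x \<le> dist y z" by (simp add: dist_norm norm_le)
qed

lemma separating_affine_minorant:
  fixes f :: "'a::euclidean_space \<Rightarrow> real"
  assumes D: "open D" "convex_on D f" and K: "convex K" "K \<subseteq> D" "x \<in> K"
    and min: "\<And>y. y \<in> K \<Longrightarrow> f x \<le> f y"
  obtains g \<beta> where "\<And>z. z \<in> D \<Longrightarrow> inner g z - f z \<le> \<beta>"
    and "\<And>y t. y \<in> K \<Longrightarrow> t < f x \<Longrightarrow> \<beta> \<le> inner g y - t"
proof -
  have "x \<in> D" using K by blast
  have "epigraph D f \<inter> K \<times> {..<f x} = {}" by (force simp: mem_epigraph dest: min)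
  moreover have "(x, f x) \<in> epigraph D f" "(x, f x - 1) \<in> K \<times> {..<f x}"
    using K \<open>x \<in> D\<close> by (auto simp: mem_epigraph)
  ultimately obtain p b where "p \<noteq> 0" and p: "\<forall>q\<in>epigraph D f. inner p q \<le> b"
    "\<forall>q\<in>K \<times> {..<f x}. b \<le> inner p q"
    using separating_hyperplane_sets[OF convex_epigraphI[OF D(2)]
        convex_Times[OF K(1) convex_real_interval(4)]] by blast
  obtain a c where [simp]: "p = (a, c)" by fastforce
  have above: "inner a z + c * t \<le> b" if "z \<in> D" "f z \<le> t" for z t
    using p(1)[rule_format, of "(z, t)"] that by (simp add: mem_epigraph)
  have below: "b \<le> inner a y + c * t" if "y \<in> K" "t < f x" for y t
    using p(2)[rule_format, of "(y, t)"] that by simp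
  have "c \<le> 0"
  proof (rule ccontr)
    assume "\<not> c \<le> 0"
    define t where "t = max (f x) ((b - inner a x) / c + 1)"
    have "b < inner a x + c * ((b - inner a x) / c + 1)"
      using \<open>\<not> c \<le> 0\<close> by (simp add: field_simps)
    also have "\<dots> \<le> inner a x + c * t"
      using \<open>\<not> c \<le> 0\<close> by (simp add: t_def)
    also have "\<dots> \<le> b" using above[OF \<open>x \<in> D\<close>] by (simp add: t_def)
    finally show False by simp
  qed
  (* Openness of D excludes a vertical hyperplane: it would make x maximise inner a on D. *)
  moreover have "c \<noteq> 0"
  proof
    assume "c = 0"
    then have "inner a z \<le> inner a x" if "z \<in> D" for z
      using above[OF that order_refl] below[OF \<open>x \<in> K\<close>, of "f x - 1"] by simp
    then have "a = 0" using inner_max_on_open_imp_zero[OF D(1) \<open>x \<in> D\<close>] by blast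
    with \<open>c = 0\<close> \<open>p \<noteq> 0\<close> show False by (simp add: zero_prod_def)
  qed
  ultimately have "c < 0" by simp
  have affine_form: "inner ((- 1 / c) *\<^sub>R a) y - t = (inner a y + c * t) / - c" for y t
    using \<open>c < 0\<close> by (simp add: field_simps)
  show thesis
  proof
    show "inner ((- 1 / c) *\<^sub>R a) z - f z \<le> b / - c" if "z \<in> D" for z
      unfolding affine_form using above[OF that order_refl] \<open>c < 0\<close> by (simp add: divide_right_mono_neg)
    show "b / - c \<le> inner ((- 1 / c) *\<^sub>R a) y - t" if "y \<in> K" "t < f x" for y t
      unfolding affine_form using below[OF that] \<open>c < 0\<close> by (simp add: divide_right_mono_neg)
  qed
qed

lemma subgradient_at_constrained_minimum:
  fixes f :: "'a::euclidean_space \<Rightarrow> real"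
  assumes "open D" "convex_on D f" "convex K" "K \<subseteq> D" "x \<in> K"
    and "\<And>y. y \<in> K \<Longrightarrow> f x \<le> f y"
  obtains g where "\<And>z. z \<in> D \<Longrightarrow> f x + inner g (z - x) \<le> f z"
    and "\<And>y. y \<in> K \<Longrightarrow> 0 \<le> inner g (y - x)"
proof -
  obtain g \<beta> where minorant: "\<And>z. z \<in> D \<Longrightarrow> inner g z - f z \<le> \<beta>"
    and sep: "\<And>y t. y \<in> K \<Longrightarrow> t < f x \<Longrightarrow> \<beta> \<le> inner g y - t"
    using separating_affine_minorant[OF assms] by blast
  have K_bound: "\<beta> \<le> inner g y - f x" if "y \<in> K" for y
  proof -
    have "f x \<le> inner g y - \<beta>" by (rule dense_le) (use sep[OF that] in force)
    then show ?thesis by simp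
  qed
  have "x \<in> D" using assms(4,5) by blast
  show thesis
  proof
    show "f x + inner g (z - x) \<le> f z" if "z \<in> D" for z
      using minorant[OF that] K_bound[OF assms(5)] by (simp add: inner_diff_right)
    show "0 \<le> inner g (y - x)" if "y \<in> K" for y
      using minorant[OF \<open>x \<in> D\<close>] K_bound[OF that] by (simp add: inner_diff_right)
  qed
qed

lemma linear_constraint_separation:
  fixes W :: "'a::euclidean_space \<Rightarrow> 'b::euclidean_space"
  assumes W: "linear W" and S: "convex S" "x \<in> S"
    and opt: "\<And>y. y \<in> S \<Longrightarrow> W y = W x \<Longrightarrow> 0 \<le> inner g (y - x)"
  obtains \<mu> c where "(\<mu>, c) \<noteq> 0" "\<mu> \<in> range W" "0 \<le> c"
    "\<And>y. y \<in> S \<Longrightarrow> 0 \<le> inner \<mu> (W (y - x)) + c * inner g (y - x)"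
proof -
  define h where "h = (\<lambda>(y, s). (W y, inner g y + s))"
  define C where "C = (\<lambda>p. p - h (x, 0)) ` h ` (S \<times> {0<..})"
  have "linear h"
    by (rule linearI)
       (auto simp: h_def linear_add[OF W] linear_scale[OF W] inner_add_right algebra_simps)
  have C_eq: "C = (\<lambda>(y, s). (W (y - x), inner g (y - x) + s)) ` (S \<times> {0<..})"
    by (auto simp: C_def h_def image_image linear_diff[OF W] inner_diff_right intro!: image_cong)
  have "convex C"
    unfolding C_def using S
    by (intro convex_translation_subtract convex_linear_image \<open>linear h\<close> convex_Times) auto
  moreover have "(0, 1) \<in> C"
    unfolding C_eq using S(2) by (intro rev_image_eqI[of "(x, 1)"]) (auto simp: linear_0[OF W])
  moreover have "0 \<notin> C"
    using opt by (force simp: C_eq zero_prod_def linear_diff[OF W])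
  (* Separating inside span C keeps the normal in range W \<times> UNIV; together with Slater's
     condition this rules out a degenerate multiplier in linear_constraint_multiplier. *)
  ultimately obtain p where p: "p \<in> span C" "p \<noteq> 0" "\<And>q. q \<in> C \<Longrightarrow> 0 \<le> inner p q"
    using separating_hyperplane_set_0_inspan by blast
  obtain \<mu> c where [simp]: "p = (\<mu>, c)" by fastforce
  have sep: "0 \<le> inner \<mu> (W (y - x)) + c * (inner g (y - x) + s)" if "y \<in> S" "0 < s" for y s
    using p(3)[of "(W (y - x), inner g (y - x) + s)"] that by (force simp: C_eq)
  have "C \<subseteq> range W \<times> UNIV" by (auto simp: C_eq)
  then have "span C \<subseteq> range W \<times> UNIV"
    by (intro span_minimal subspace_Times subspace_UNIV linear_subspace_image[OF W])
  then have "\<mu> \<in> range W" using p(1) by auto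
  moreover have "0 \<le> c" using sep[OF S(2), of 1] by (simp add: linear_0[OF W])
  moreover have "0 \<le> inner \<mu> (W (y - x)) + c * inner g (y - x)" if "y \<in> S" for y
  proof (rule field_le_epsilon)
    fix e :: real assume "0 < e"
    then have "c * (e / (c + 1)) \<le> e" using \<open>0 \<le> c\<close> by (simp add: field_simps)
    then show "0 \<le> inner \<mu> (W (y - x)) + c * inner g (y - x) + e"
      using sep[OF that, of "e / (c + 1)"] \<open>0 < e\<close> \<open>0 \<le> c\<close> by (simp add: distrib_left)
  qed
  ultimately show thesis using that p(2) by simp
qed

lemma linear_constraint_multiplier:
  fixes W :: "'a::euclidean_space \<Rightarrow> 'b::euclidean_space"
  assumes W: "linear W" and S: "convex S" "x \<in> S"
    and slater: "x0 \<in> interior S" "W x0 = W x"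
    and opt: "\<And>y. y \<in> S \<Longrightarrow> W y = W x \<Longrightarrow> 0 \<le> inner g (y - x)"
  obtains \<mu> where "\<And>y. y \<in> S \<Longrightarrow> 0 \<le> inner (g - adjoint W \<mu>) (y - x)"
proof -
  obtain \<mu> c where nz: "(\<mu>, c) \<noteq> 0" and "\<mu> \<in> range W" "0 \<le> c"
    and sep: "\<And>y. y \<in> S \<Longrightarrow> 0 \<le> inner \<mu> (W (y - x)) + c * inner g (y - x)"
    using linear_constraint_separation[OF W S opt] by blast
  have adj: "inner \<mu> (W v) = inner (adjoint W \<mu>) v" for v
    by (simp add: adjoint_clauses(2)[OF W])
  have "c \<noteq> 0"
  proof
    assume "c = 0"
    have "inner (- adjoint W \<mu>) y \<le> inner (- adjoint W \<mu>) x0" if "y \<in> interior S" for y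
      using sep[OF interior_subset[THEN subsetD, OF that]] slater(2) \<open>c = 0\<close>
      by (simp add: adj[symmetric] linear_diff[OF W] inner_diff_right)
    then have "adjoint W \<mu> = 0"
      using inner_max_on_open_imp_zero[OF open_interior slater(1), of "- adjoint W \<mu>"] by simp
    moreover obtain v where "\<mu> = W v" using \<open>\<mu> \<in> range W\<close> by blast
    ultimately have "inner \<mu> \<mu> = 0" using adj[of v] by (simp add: inner_commute)
    with \<open>c = 0\<close> nz show False by (simp add: zero_prod_def)
  qed
  show thesis
  proof
    fix y assume "y \<in> S"
    have "inner (g - adjoint W ((- 1 / c) *\<^sub>R \<mu>)) (y - x)
        = (inner \<mu> (W (y - x)) + c * inner g (y - x)) / c"
      using \<open>c \<noteq> 0\<close> by (simp add: adjoint_clauses(2)[OF W] inner_diff_left field_simps)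
    also have "\<dots> \<ge> 0" using sep[OF \<open>y \<in> S\<close>] \<open>0 \<le> c\<close> by simp
    finally show "0 \<le> inner (g - adjoint W ((- 1 / c) *\<^sub>R \<mu>)) (y - x)" .
  qed
qed

lemma linear_blockproj: "linear (blockproj blk i)"
  by (rule linearI) (auto simp: blockproj_def vec_eq_iff)

lemma blockproj_add: "blockproj blk i (x + y) = blockproj blk i x + blockproj blk i y"
  and blockproj_scaleR: "blockproj blk i (c *\<^sub>R x) = c *\<^sub>R blockproj blk i x"
  by (simp_all add: linear_blockproj linear_add linear_scale)

lemma blockproj_in_blocksub: "blockproj blk i x \<in> blocksub blk i"
  by (simp add: blockproj_def blocksub_def)

lemma prodset_eq_INT: "prodset blk S = (\<Inter>i. blockproj blk i -` S i)"
  by (auto simp: prodset_def)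

lemma closed_prodset: "(\<And>i. closed (S i)) \<Longrightarrow> closed (prodset blk S)"
  unfolding prodset_eq_INT
  by (intro closed_INT ballI continuous_closed_vimage linear_continuous_at)
     (simp_all add: linear_blockproj linear_linear)

lemma open_prodset: "(\<And>i. open (S i)) \<Longrightarrow> open (prodset blk (S :: 'n::finite \<Rightarrow> _))"
  unfolding prodset_eq_INT
  by (intro open_INT ballI continuous_open_vimage linear_continuous_at)
     (simp_all add: linear_blockproj linear_linear)

lemma convex_prodset: "(\<And>i. convex (S i)) \<Longrightarrow> convex (prodset blk S)"
  unfolding prodset_eq_INT by (intro convex_INT convex_linear_vimage linear_blockproj)

lemma prodset_Int_blocksub: "prodset blk (\<lambda>i. S i \<inter> blocksub blk i) = prodset blk S"
  by (auto simp: prodset_def blockproj_in_blocksub)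

lemma linear_Wmul: "linear (Wmul blk Wl)"
  by (rule linearI)
     (simp_all add: Wmul_def blockproj_add blockproj_scaleR matrix_vector_right_distrib
       sum.distrib scaleR_sum_right matrix_vector_mult_scaleR)

lemma strictly_convex_on_imp_convex_on:
  assumes "strictly_convex_on S f" shows "convex_on S f"
proof (rule convex_onI)
  show "convex S" using assms by (simp add: strictly_convex_on_def)
  fix t :: real and x y assume "0 < t" "t < 1" "x \<in> S" "y \<in> S"
  then show "f ((1 - t) *\<^sub>R x + t *\<^sub>R y) \<le> (1 - t) * f x + t * f y"
    using assms unfolding strictly_convex_on_def
    by (cases "x = y") (simp_all flip: scaleR_add_left distrib_right, smt (verit))
qed

lemma convex_on_sumfun:
  fixes C :: "'n::finite \<Rightarrow> (real^'q::finite) set"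
  assumes "\<And>i. convex_on (C i) (fl i)"
  shows "convex_on (prodset blk C) (sumfun blk fl)"
  unfolding convex_on_def
proof (intro conjI ballI allI impI)
  show "convex (prodset blk C)" using assms by (intro convex_prodset convex_on_imp_convex)
  fix x y and u v :: real
  assume "x \<in> prodset blk C" "y \<in> prodset blk C" "0 \<le> u" "0 \<le> v" "u + v = 1"
  then have "fl i (u *\<^sub>R blockproj blk i x + v *\<^sub>R blockproj blk i y)
      \<le> u * fl i (blockproj blk i x) + v * fl i (blockproj blk i y)" for i
    using assms[of i] by (simp add: convex_on_def prodset_def)
  then show "sumfun blk fl (u *\<^sub>R x + v *\<^sub>R y) \<le> u * sumfun blk fl x + v * sumfun blk fl y"
    by (auto simp: sumfun_def blockproj_add blockproj_scaleR sum_distrib_left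
        simp flip: sum.distrib intro!: sum_mono)
qed

definition agent_sum :: "real^('n::finite \<times> 'm::finite) \<Rightarrow> real^'m" where
  "agent_sum u = (\<chi> k. \<Sum>i\<in>UNIV. u $ (i, k))"

lemma linear_agent_sum: "linear agent_sum"
  by (rule linearI) (simp_all add: agent_sum_def vec_eq_iff sum.distrib sum_distrib_left)

lemma agent_sum_stack: "agent_sum (stack dl) = (\<Sum>i\<in>UNIV. dl i)"
  by (simp add: agent_sum_def stack_def vec_eq_iff)

lemma agent_sum_Wbar: "agent_sum (Wbar blk Wl *v x) = Wmul blk Wl x"
proof -
  have "(Wbar blk Wl *v x) $ (i, k) = (Wl i *v blockproj blk i x) $ k" for i k
    by (auto simp: Wbar_def matrix_vector_mult_def blockproj_def intro!: sum.cong)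
  then show ?thesis by (simp add: agent_sum_def Wmul_def vec_eq_iff)
qed

lemma inner_stack_const: "inner (stack (\<lambda>_. c)) u = inner c (agent_sum u)"
proof -
  have "inner (stack (\<lambda>_. c)) u = (\<Sum>i\<in>UNIV. \<Sum>k\<in>UNIV. c $ k * u $ (i, k))"
    unfolding inner_vec_def UNIV_Times_UNIV[symmetric] sum.cartesian_product
    by (simp add: stack_def case_prod_beta)
  also have "\<dots> = inner c (agent_sum u)"
    by (subst sum.swap) (simp add: inner_vec_def agent_sum_def sum_distrib_left)
  finally show ?thesis .
qed

lemma adjoint_Wmul: "adjoint (Wmul blk Wl) = (\<lambda>\<mu>. transpose (Wbar blk Wl) *v stack (\<lambda>_. \<mu>))"
proof (rule adjoint_unique, intro allI)
  fix x \<mu>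
  have "inner (Wmul blk Wl x) \<mu> = inner (stack (\<lambda>_. \<mu>)) (Wbar blk Wl *v x)"
    by (simp add: inner_stack_const agent_sum_Wbar inner_commute)
  also have "\<dots> = inner x (transpose (Wbar blk Wl) *v stack (\<lambda>_. \<mu>))"
    by (simp add: transpose_matrix_vector dot_lmul_matrix inner_commute[of x])
  finally show "inner (Wmul blk Wl x) \<mu> = inner x (transpose (Wbar blk Wl) *v stack (\<lambda>_. \<mu>))" .
qed

lemma kron_id_mult_component:
  "(kron_id A *v z) $ (i, k) = (\<Sum>j\<in>UNIV. A $ i $ j * z $ (j, k))"
proof -
  have "(kron_id A *v z) $ (i, k) = (\<Sum>j\<in>UNIV. \<Sum>k'\<in>UNIV. if k' = k then A $ i $ j * z $ (j, k') else 0)"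
    unfolding matrix_vector_mult_def UNIV_Times_UNIV[symmetric] sum.cartesian_product
    by (simp only: vec_lambda_beta) (intro sum.cong, auto simp: kron_id_def)
  then show ?thesis by simp
qed

lemma laplacian_mult_eq:
  "(\<Sum>j\<in>UNIV. laplacian a $ i $ j * \<mu> j) = (\<Sum>j\<in>UNIV - {i}. a $ i $ j * (\<mu> i - \<mu> j))"
  by (simp add: sum.remove[of UNIV i] laplacian_def sum_distrib_right right_diff_distrib
      sum_subtractf sum_negf)

lemma laplacian_row_sum: "(\<Sum>j\<in>UNIV. laplacian a $ i $ j) = 0"
  using laplacian_mult_eq[of a i "\<lambda>_. 1"] by simp

lemma laplacian_symmetric:
  "\<forall>i j. a $ i $ j = a $ j $ i \<Longrightarrow> laplacian a $ i $ j = laplacian a $ j $ i"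
  by (simp add: laplacian_def)

lemma transpose_kron_id_laplacian:
  "\<forall>i j. a $ i $ j = a $ j $ i \<Longrightarrow> transpose (kron_id (laplacian a)) = kron_id (laplacian a)"
  by (auto simp: transpose_def kron_id_def vec_eq_iff laplacian_symmetric)

lemma agent_sum_kron_id_laplacian:
  assumes "\<forall>i j. a $ i $ j = a $ j $ i"
  shows "agent_sum (kron_id (laplacian a) *v z) = 0"
proof -
  have "(\<Sum>i\<in>UNIV. \<Sum>j\<in>UNIV. laplacian a $ i $ j * z $ (j, k))
      = (\<Sum>j\<in>UNIV. (\<Sum>i\<in>UNIV. laplacian a $ j $ i) * z $ (j, k))" for k
    by (subst sum.swap) (simp add: sum_distrib_right laplacian_symmetric[OF assms])
  then show ?thesis
    by (simp add: agent_sum_def vec_eq_iff kron_id_mult_component laplacian_row_sum)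
qed

lemma kron_id_laplacian_stack_const: "kron_id (laplacian a) *v stack (\<lambda>_. c) = 0"
  by (simp add: vec_eq_iff kron_id_mult_component stack_def laplacian_row_sum
      flip: sum_distrib_right)

lemma laplacian_kernel_consensus:
  fixes a :: "real^'n::finite^'n"
  assumes nonneg: "\<forall>i j. a $ i $ j \<ge> 0" and conn: "connected_graph a"
    and ker: "\<And>i. (\<Sum>j\<in>UNIV. laplacian a $ i $ j * \<mu> j) = 0"
  shows "\<mu> i = \<mu> j"
proof -
  define M where "M = Max (range \<mu>)"
  have "M \<in> range \<mu>" unfolding M_def by (rule Max_in) auto
  then obtain i0 where i0: "\<mu> i0 = M" by auto
  have le_M: "\<mu> k \<le> M" for k unfolding M_def by (rule Max_ge) auto
  have neighbour_max: "\<mu> v = M" if "\<mu> u = M" "u \<noteq> v" "a $ u $ v > 0" for u v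
  proof -
    have "(\<Sum>j\<in>UNIV - {u}. a $ u $ j * (\<mu> u - \<mu> j)) = 0"
      using ker laplacian_mult_eq[of a u \<mu>] by simp
    moreover have "\<forall>j\<in>UNIV - {u}. 0 \<le> a $ u $ j * (\<mu> u - \<mu> j)"
      using nonneg le_M that(1) by simp
    ultimately have "a $ u $ v * (\<mu> u - \<mu> v) = 0"
      using sum_nonneg_eq_0_iff[of "UNIV - {u}" "\<lambda>j. a $ u $ j * (\<mu> u - \<mu> j)"] that(2) by auto
    with that show ?thesis by simp
  qed
  have "\<mu> k = M" for k
  proof -
    have "(i0, k) \<in> {(u, v). u \<noteq> v \<and> a $ u $ v > 0}\<^sup>*"
      using conn by (simp add: connected_graph_def)
    then show ?thesis by (induct rule: rtrancl_induct) (use i0 neighbour_max in auto)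
  qed
  then show ?thesis by simp
qed

lemma kron_id_laplacian_kernel:
  fixes a :: "real^'n::finite^'n" and lam :: "real^('n \<times> 'm::finite)"
  assumes "\<forall>i j. a $ i $ j \<ge> 0" "connected_graph a" "kron_id (laplacian a) *v lam = 0"
  shows "\<exists>c. lam = stack (\<lambda>_. c)"
proof
  have "lam $ (i, k) = lam $ (j, k)" for i j k
  proof (rule laplacian_kernel_consensus[OF assms(1,2)])
    show "(\<Sum>j\<in>UNIV. laplacian a $ i $ j * lam $ (j, k)) = 0" for i
      using assms(3) by (metis kron_id_mult_component zero_index)
  qed
  then show "lam = stack (\<lambda>_. \<chi> k. lam $ (undefined, k))"
    by (simp add: vec_eq_iff stack_def)
qed

lemma kron_id_laplacian_range:
  fixes a :: "real^'n::finite^'n" and u :: "real^('n \<times> 'm::finite)"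
  assumes sym: "\<forall>i j. a $ i $ j = a $ j $ i" and "\<forall>i j. a $ i $ j \<ge> 0" "connected_graph a"
    and u: "agent_sum u = 0"
  shows "\<exists>z. kron_id (laplacian a) *v z = u"
  \<comment> \<open>L is symmetric, so its range is the orthogonal complement of the consensus vectors.\<close>
proof -
  let ?L = "kron_id (laplacian a)"
  let ?R = "range (\<lambda>z. ?L *v z)"
  have "subspace ?R"
    by (rule linear_subspace_image[OF matrix_vector_mul_linear subspace_UNIV])
  then obtain y q where y: "y \<in> ?R" and q: "\<And>w. w \<in> ?R \<Longrightarrow> orthogonal q w" and "u = y + q"
    using orthogonal_subspace_decomp_exists[of ?R u]
    unfolding span_eq_iff[THEN iffD2, OF \<open>subspace ?R\<close>] by blast
  have L_self_adjoint: "inner (?L *v v) w = inner v (?L *v w)" for v w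
    by (metis dot_lmul_matrix transpose_matrix_vector transpose_kron_id_laplacian[OF sym])
  have "inner (?L *v q) (?L *v q) = 0"
    using q[of "?L *v (?L *v q)"] by (simp add: orthogonal_def L_self_adjoint)
  then obtain c where "q = stack (\<lambda>_. c)"
    using kron_id_laplacian_kernel[OF assms(2,3)] by auto
  then have "inner q q = 0"
    using q[OF y] u \<open>u = y + q\<close> inner_stack_const[of c u]
    by (simp add: orthogonal_def inner_add_right)
  then show ?thesis using y \<open>u = y + q\<close> by auto
qed

locale dpofa_problem =
  fixes blk :: "'q::finite \<Rightarrow> 'n::finite"
    and a :: "real^'n^'n"
    and Om :: "'n \<Rightarrow> (real^'q) set"
    and U :: "'n \<Rightarrow> (real^'q) set"
    and fl :: "'n \<Rightarrow> real^'q \<Rightarrow> real"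
    and Wl :: "'n \<Rightarrow> real^'q^'m::finite"
    and dl :: "'n \<Rightarrow> real^'m"
    and d0 :: "real^'m"
  assumes sym: "\<forall>i j. a $ i $ j = a $ j $ i"
    and nonneg: "\<forall>i j. a $ i $ j \<ge> 0"
    and conn: "connected_graph a"
    and Om_sub: "\<forall>i. Om i \<subseteq> blocksub blk i"
    and Om_closed: "\<forall>i. closed (Om i)"
    and Om_convex: "\<forall>i. convex (Om i)"
    and U_open: "\<forall>i. open (U i)"
    and U_sup: "\<forall>i. Om i \<subseteq> U i"
    and f_strict: "\<forall>i. strictly_convex_on (U i \<inter> blocksub blk i) (fl i)"
    and d0_sum: "d0 = (\<Sum>i\<in>UNIV. dl i)"
    and slater: "\<exists>x\<in>interior (prodset blk Om). Wmul blk Wl x = d0"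
begin

abbreviation "\<Omega> \<equiv> prodset blk Om"
abbreviation "F \<equiv> sumfun blk fl"
abbreviation "D \<equiv> prodset blk (\<lambda>i. U i \<inter> blocksub blk i)"
abbreviation "W \<equiv> Wmul blk Wl"
abbreviation "WB \<equiv> Wbar blk Wl"
abbreviation "L \<equiv> kron_id (laplacian a)"

abbreviation optimal :: "real^'q \<Rightarrow> bool" where
  "optimal x \<equiv> x \<in> \<Omega> \<and> W x = d0 \<and> (\<forall>x'\<in>\<Omega>. W x' = d0 \<longrightarrow> F x \<le> F x')"

abbreviation equilibrium :: "real^'q \<Rightarrow> real^('n \<times> 'm) \<Rightarrow> real^('n \<times> 'm) \<Rightarrow> bool" where
  "equilibrium y lam z \<equiv> \<exists>g\<in>subdiff D F (closest_point \<Omega> y).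
      0 = - y + closest_point \<Omega> y - g + transpose WB *v lam \<and>
      0 = stack dl - WB *v closest_point \<Omega> y - L *v lam - L *v z \<and>
      0 = L *v lam"

lemma closed_Omega: "closed \<Omega>"
  using Om_closed by (intro closed_prodset) blast

lemma convex_Omega: "convex \<Omega>"
  using Om_convex by (intro convex_prodset) blast

lemma open_D: "open D"
  unfolding prodset_Int_blocksub using U_open by (intro open_prodset) blast

lemma Omega_subset_D: "\<Omega> \<subseteq> D"
  using Om_sub U_sup by (fastforce simp: prodset_def)

lemma convex_on_F: "convex_on D F"
  using f_strict by (intro convex_on_sumfun strictly_convex_on_imp_convex_on) blast

lemma agent_sum_residual:
  "agent_sum (stack dl - WB *v x - L *v lam - L *v z) = d0 - W x"
  by (simp add: linear_diff[OF linear_agent_sum] agent_sum_stack agent_sum_Wbar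
      agent_sum_kron_id_laplacian[OF sym] d0_sum)

lemma equilibrium_imp_optimal:
  assumes "equilibrium y lam z"
  shows "optimal (closest_point \<Omega> y)"
proof -
  let ?x = "closest_point \<Omega> y"
  obtain g where g: "g \<in> subdiff D F ?x"
    and grad: "0 = - y + ?x - g + transpose WB *v lam"
    and flow: "0 = stack dl - WB *v ?x - L *v lam - L *v z" and "0 = L *v lam"
    using assms by blast
  obtain c where lam: "lam = stack (\<lambda>_. c)"
    using kron_id_laplacian_kernel[OF nonneg conn] \<open>0 = L *v lam\<close> by metis
  have "\<Omega> \<noteq> {}" using slater interior_subset by blast
  with closed_Omega have "?x \<in> \<Omega>" by (rule closest_point_in_set)
  moreover have "W ?x = d0"
    using arg_cong[OF flow, of agent_sum] by (simp add: agent_sum_residual linear_0[OF linear_agent_sum])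
  moreover have "F ?x \<le> F x'" if "x' \<in> \<Omega>" "W x' = d0" for x'
  proof -
    have "y - ?x = - g + adjoint W c" using grad by (simp add: adjoint_Wmul lam algebra_simps)
    moreover have "inner (adjoint W c) (x' - ?x) = 0"
      using that \<open>W ?x = d0\<close> by (simp add: adjoint_clauses(2)[OF linear_Wmul] linear_diff[OF linear_Wmul])
    moreover have "inner (y - ?x) (x' - ?x) \<le> 0"
      using convex_Omega closed_Omega \<open>x' \<in> \<Omega>\<close> by (rule closest_point_dot)
    ultimately have "0 \<le> inner g (x' - ?x)" by (simp add: inner_diff_left)
    moreover have "F ?x + inner g (x' - ?x) \<le> F x'"
      using g \<open>x' \<in> \<Omega>\<close> Omega_subset_D by (auto simp: subdiff_def)
    ultimately show ?thesis by simp
  qed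
  ultimately show ?thesis by blast
qed

lemma optimal_imp_equilibrium:
  assumes x: "optimal x"
  shows "\<exists>y lam z. equilibrium y lam z \<and> x = closest_point \<Omega> y"
proof -
  define K where "K = \<Omega> \<inter> W -` {d0}"
  have "convex K"
    unfolding K_def by (intro convex_Int convex_Omega convex_linear_vimage linear_Wmul) simp
  then obtain g where subgrad: "\<And>z. z \<in> D \<Longrightarrow> F x + inner g (z - x) \<le> F z"
    and normal: "\<And>y. y \<in> K \<Longrightarrow> 0 \<le> inner g (y - x)"
    using subgradient_at_constrained_minimum[OF open_D convex_on_F, of K x] x Omega_subset_D
    by (auto simp: K_def)
  have "\<And>y. y \<in> \<Omega> \<Longrightarrow> W y = W x \<Longrightarrow> 0 \<le> inner g (y - x)"
    using normal x by (simp add: K_def)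
  moreover obtain x0 where "x0 \<in> interior \<Omega>" "W x0 = W x" using slater x by auto
  ultimately obtain \<mu> where mult: "\<And>y. y \<in> \<Omega> \<Longrightarrow> 0 \<le> inner (g - adjoint W \<mu>) (y - x)"
    using linear_constraint_multiplier[OF linear_Wmul convex_Omega] x by blast
  define lam where "lam = stack (\<lambda>_::'n. \<mu>)"
  define y where "y = x - g + transpose WB *v lam"
  have proj: "closest_point \<Omega> y = x"
  proof (rule closest_point_unique_dot[OF convex_Omega closed_Omega])
    show "x \<in> \<Omega>" using x by blast
    show "inner (y - x) (z - x) \<le> 0" if "z \<in> \<Omega>" for z
      using mult[OF that] by (simp add: y_def lam_def adjoint_Wmul inner_diff_left)
  qed
  have "agent_sum (stack dl - WB *v x) = 0"
    using x by (simp add: linear_diff[OF linear_agent_sum] agent_sum_stack agent_sum_Wbar d0_sum)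
  then obtain z where z: "L *v z = stack dl - WB *v x"
    using kron_id_laplacian_range[OF sym nonneg conn] by blast
  have "g \<in> subdiff D F x" using subgrad by (simp add: subdiff_def)
  moreover have "L *v lam = 0" by (simp add: lam_def kron_id_laplacian_stack_const)
  ultimately have "equilibrium y lam z"
    unfolding proj using z by (intro bexI[of _ g]) (auto simp: y_def)
  with proj show ?thesis by blast
qed

end

theorem theorem1:
  fixes blk :: "'q::finite \<Rightarrow> 'n::finite"
    and a :: "real^'n^'n"
    and Om :: "'n \<Rightarrow> (real^'q) set"
    and U :: "'n \<Rightarrow> (real^'q) set"
    and fl :: "'n \<Rightarrow> real^'q \<Rightarrow> real"
    and Wl :: "'n \<Rightarrow> real^'q^'m::finite"
    and dl :: "'n \<Rightarrow> real^'m"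
    and d0 :: "real^'m"
  assumes sym: "\<forall>i j. a $ i $ j = a $ j $ i"
    and nonneg: "\<forall>i j. a $ i $ j \<ge> 0"
    and conn: "connected_graph a"
    and Om_sub: "\<forall>i. Om i \<subseteq> blocksub blk i"
    and Om_closed: "\<forall>i. closed (Om i)"
    and Om_convex: "\<forall>i. convex (Om i)"
    and U_open: "\<forall>i. open (U i)"
    and U_sup: "\<forall>i. Om i \<subseteq> U i"
    and f_strict: "\<forall>i. strictly_convex_on (U i \<inter> blocksub blk i) (fl i)"
    and d0_def: "d0 = (\<Sum>i\<in>UNIV. dl i)"
    and slater: "\<exists>x\<in>interior (prodset blk Om). Wmul blk Wl x = d0"
  shows "let \<Omega> = prodset blk Om; f = sumfun blk fl;
             D = prodset blk (\<lambda>i. U i \<inter> blocksub blk i);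
             WB = Wbar blk Wl; d = stack dl; L = kron_id (laplacian a);
             is_sol = (\<lambda>x. x \<in> \<Omega> \<and> Wmul blk Wl x = d0 \<and>
                         (\<forall>x'\<in>\<Omega>. Wmul blk Wl x' = d0 \<longrightarrow> f x \<le> f x'));
             is_eq = (\<lambda>y lam z. \<exists>g\<in>subdiff D f (closest_point \<Omega> y).
                         0 = - y + closest_point \<Omega> y - g + transpose WB *v lam \<and>
                         0 = d - WB *v closest_point \<Omega> y - L *v lam - L *v z \<and>
                         0 = L *v lam)
         in (\<forall>y lam z. is_eq y lam z \<longrightarrow> is_sol (closest_point \<Omega> y)) \<and>
            (\<forall>xs. is_sol xs \<longrightarrow> (\<exists>y lam z. is_eq y lam z \<and> xs = closest_point \<Omega> y))"
proof -
  interpret dpofa_problem blk a Om U fl Wl dl d0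
    using assms by unfold_locales
  show ?thesis
    unfolding Let_def using equilibrium_imp_optimal optimal_imp_equilibrium by blast
qed

end
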